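(* In the setting of the context, for each $j\in[N]$ one has $p_j\le\frac{\bar M-1}{\bar M}\,p_j$ (hence $p_j=0$).
   Context: Standing setting: $\Gamma$ countably infinite, $n\in\mathbb N$, $\mathbb Z\Gamma$ the integral group ring (product $(fg)_t=\sum_sf_{ts^{-1}}g_s$, involution $(f^* )_s=f_{s^{-1}}$, $(f^* )^{(km)}=(f^{(mk)})^*$). $f=M-g\in M_n(\mathbb Z\Gamma)$, $M=\mathrm{diag}(M_1,\dots,M_n)$ positive integers, $M_k>\sum_m\|g^{(km)}\|_1$ for all $k$, and a subsemigroup $P\subseteq\Gamma\setminus\{e_\Gamma\}$ containing all $\mathrm{supp}(g^{(km)})$; $f$ is invertible in $M_n(\ell^1_{\mathbb R}(\Gamma))$. $\bar P=P\cup\{e_\Gamma\}$, $\bar M=\max_kM_k$, $S_f=\prod_k\{0,\dots,M_k-1\}$, $Y=S_f^\Gamma$ (row vectors with entries $y_{s,k}$, $(yF)_m=\sum_ky_kF^{(km)}$ by convolution). $\nu$ is a probability measure on $S_f$ whose marginal on each factor $\{0,\dots,M_k-1\}$ is uniform; for $E\subseteq\Gamma$, $\nu^E$ is the product measure on $S_f^E$ and $\pi_E$ the restriction $S_f^\Gamma\to S_f^E$. $N$ is a fixed integer $\ge\bar M\|(f^* )^{-1}\|_{1,\infty}$ ($\|F\|_{1,\infty}=\max_m\sum_k\|F^{(km)}\|_1$), $[N]=\{1,\dots,N\}$, $V=(\{-N,\dots,N\}^\Gamma)^n\setminus\{0\}$, $Z=\{(y,c)\in Y\times V:y+cf^*\in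 Y\}$, $\varphi:Y\times V\to Y$ the projection. $Z^+_{j,s,k}=\{(y,c)\in Z:\max_{t,m}|c_{t,m}|=c_{s,k}=j\}$, $Z^-_{j,s,k}=\{(y,c)\in Z:\max_{t,m}|c_{t,m}|=-c_{s,k}=j\}$; the sets $\varphi(Z^\pm_{j,s,k})$ are closed. The quantity $\nu^{s\bar P}(\pi_{s\bar P}\varphi(Z^\dagger_{j,s,k}))$ does not depend on $s\in\Gamma$, and $p_j:=\max_{k\in[n],\dagger\in\{+,-\}}\nu^{s\bar P}(\pi_{s\bar P}\varphi(Z^\dagger_{j,s,k}))$ for any $s\in\Gamma$. *)

theory Defs
  imports "HOL-Analysis.Analysis" "HOL-Probability.Probability"
begin

text \<open>Group elements: type class group_add, written additively (so t s^-1 is t - s, e is 0).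
Matrix indices range over {1..n}.  Elements of the group ring are functions 'g => int
with finite support.\<close>

definition supp :: "('g \<Rightarrow> 'a::zero) \<Rightarrow> 'g set" where
  "supp a = {s. a s \<noteq> 0}"

definition l1_int :: "('g \<Rightarrow> int) \<Rightarrow> int" where
  "l1_int a = (\<Sum>s\<in>supp a. \<bar>a s\<bar>)"

definition conv :: "('g::group_add \<Rightarrow> 'a::{comm_ring_1,topological_comm_monoid_add,t2_space})
    \<Rightarrow> ('g \<Rightarrow> 'a) \<Rightarrow> 'g \<Rightarrow> 'a" where
  "conv a b t = (\<Sum>\<^sub>\<infinity>s. a (t - s) * b s)"

definition fmat :: "(nat \<Rightarrow> nat) \<Rightarrow> (nat \<Rightarrow> nat \<Rightarrow> 'g::group_add \<Rightarrow> int)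
    \<Rightarrow> nat \<Rightarrow> nat \<Rightarrow> 'g \<Rightarrow> int" where
  "fmat M g k m = (\<lambda>s. (if k = m \<and> s = 0 then int (M k) else 0) - g k m s)"

definition mstar :: "(nat \<Rightarrow> nat \<Rightarrow> 'g::group_add \<Rightarrow> 'a) \<Rightarrow> nat \<Rightarrow> nat \<Rightarrow> 'g \<Rightarrow> 'a" where
  "mstar A k m = (\<lambda>s. A m k (- s))"

definition is_l1_inverse :: "nat \<Rightarrow> (nat \<Rightarrow> nat \<Rightarrow> 'g::group_add \<Rightarrow> real)
    \<Rightarrow> (nat \<Rightarrow> nat \<Rightarrow> 'g \<Rightarrow> int) \<Rightarrow> bool" where
  "is_l1_inverse n F A \<longleftrightarrow>
     (\<forall>k\<in>{1..n}. \<forall>m\<in>{1..n}. ((\<lambda>s. \<bar>F k m s\<bar>) summable_on UNIV)) \<and>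
     (\<forall>k\<in>{1..n}. \<forall>m\<in>{1..n}. \<forall>t.
        (\<Sum>l\<in>{1..n}. conv (\<lambda>s. real_of_int (A k l s)) (F l m) t)
          = (if k = m \<and> t = 0 then 1 else 0)) \<and>
     (\<forall>k\<in>{1..n}. \<forall>m\<in>{1..n}. \<forall>t.
        (\<Sum>l\<in>{1..n}. conv (F k l) (\<lambda>s. real_of_int (A l m s)) t)
          = (if k = m \<and> t = 0 then 1 else 0))"

definition norm_1inf :: "nat \<Rightarrow> (nat \<Rightarrow> nat \<Rightarrow> 'g \<Rightarrow> real) \<Rightarrow> real" where
  "norm_1inf n F = Max {(\<Sum>k\<in>{1..n}. (\<Sum>\<^sub>\<infinity>s. \<bar>F k m s\<bar>)) | m. m \<in> {1..n}}"

definition Sf :: "nat \<Rightarrow> (nat \<Rightarrow> nat) \<Rightarrow> (nat \<Rightarrow> int) set" where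
  "Sf n M = PiE {1..n} (\<lambda>k. {0..<int (M k)})"

definition Yset :: "nat \<Rightarrow> (nat \<Rightarrow> nat) \<Rightarrow> ('g \<Rightarrow> nat \<Rightarrow> int) set" where
  "Yset n M = {y. \<forall>s. y s \<in> Sf n M}"

definition Vset :: "nat \<Rightarrow> nat \<Rightarrow> ('g \<Rightarrow> nat \<Rightarrow> int) set" where
  "Vset n N = {c. (\<forall>s. c s \<in> PiE {1..n} (\<lambda>_. {- int N..int N})) \<and>
                  (\<exists>s. \<exists>k\<in>{1..n}. c s k \<noteq> 0)}"

definition shift_act :: "nat \<Rightarrow> (nat \<Rightarrow> nat \<Rightarrow> 'g::group_add \<Rightarrow> int)
    \<Rightarrow> ('g \<Rightarrow> nat \<Rightarrow> int) \<Rightarrow> ('g \<Rightarrow> nat \<Rightarrow> int) \<Rightarrow> 'g \<Rightarrow> nat \<Rightarrow> int" where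
  "shift_act n F y c = (\<lambda>s. \<lambda>m\<in>{1..n}. y s m + (\<Sum>k\<in>{1..n}. conv (\<lambda>t. c t k) (F k m) s))"

definition Zset :: "nat \<Rightarrow> (nat \<Rightarrow> nat) \<Rightarrow> nat \<Rightarrow> (nat \<Rightarrow> nat \<Rightarrow> 'g::group_add \<Rightarrow> int)
    \<Rightarrow> (('g \<Rightarrow> nat \<Rightarrow> int) \<times> ('g \<Rightarrow> nat \<Rightarrow> int)) set" where
  "Zset n M N f = {(y, c). y \<in> Yset n M \<and> c \<in> Vset n N \<and> shift_act n (mstar f) y c \<in> Yset n M}"

definition cmax :: "nat \<Rightarrow> ('g \<Rightarrow> nat \<Rightarrow> int) \<Rightarrow> int" where
  "cmax n c = Max {\<bar>c t m\<bar> | t m. m \<in> {1..n}}"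

definition Zplus :: "nat \<Rightarrow> (nat \<Rightarrow> nat) \<Rightarrow> nat \<Rightarrow> (nat \<Rightarrow> nat \<Rightarrow> 'g::group_add \<Rightarrow> int)
    \<Rightarrow> nat \<Rightarrow> 'g \<Rightarrow> nat \<Rightarrow> (('g \<Rightarrow> nat \<Rightarrow> int) \<times> ('g \<Rightarrow> nat \<Rightarrow> int)) set" where
  "Zplus n M N f j s k = {(y, c) \<in> Zset n M N f. cmax n c = int j \<and> c s k = int j}"

definition Zminus :: "nat \<Rightarrow> (nat \<Rightarrow> nat) \<Rightarrow> nat \<Rightarrow> (nat \<Rightarrow> nat \<Rightarrow> 'g::group_add \<Rightarrow> int)
    \<Rightarrow> nat \<Rightarrow> 'g \<Rightarrow> nat \<Rightarrow> (('g \<Rightarrow> nat \<Rightarrow> int) \<times> ('g \<Rightarrow> nat \<Rightarrow> int)) set" where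
  "Zminus n M N f j s k = {(y, c) \<in> Zset n M N f. cmax n c = int j \<and> - c s k = int j}"

definition sPbar :: "'g::group_add \<Rightarrow> 'g set \<Rightarrow> 'g set" where
  "sPbar s P = (\<lambda>p. s + p) ` insert 0 P"

definition nuE :: "(nat \<Rightarrow> int) pmf \<Rightarrow> 'g set \<Rightarrow> ('g \<Rightarrow> nat \<Rightarrow> int) measure" where
  "nuE \<nu> E = PiM E (\<lambda>_. measure_pmf \<nu>)"

definition projmeas :: "(nat \<Rightarrow> int) pmf \<Rightarrow> 'g set \<Rightarrow>
    (('g \<Rightarrow> nat \<Rightarrow> int) \<times> ('g \<Rightarrow> nat \<Rightarrow> int)) set \<Rightarrow> real" where
  "projmeas \<nu> E Z = measure (nuE \<nu> E) ((\<lambda>y. restrict y E) ` (fst ` Z))"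

definition pj :: "nat \<Rightarrow> (nat \<Rightarrow> nat) \<Rightarrow> nat \<Rightarrow> (nat \<Rightarrow> nat \<Rightarrow> 'g::group_add \<Rightarrow> int)
    \<Rightarrow> 'g set \<Rightarrow> (nat \<Rightarrow> int) pmf \<Rightarrow> nat \<Rightarrow> 'g \<Rightarrow> real" where
  "pj n M N f P \<nu> j s = Max ({projmeas \<nu> (sPbar s P) (Zplus n M N f j s k) | k. k \<in> {1..n}}
                       \<union> {projmeas \<nu> (sPbar s P) (Zminus n M N f j s k) | k. k \<in> {1..n}})"

end

theory Submission
  imports Defs
begin

(* If (y, c) lies in Z with c_{s,k} = j = max |c| (the case -j is symmetric), the (s,k) entry of
   y + c f^* is y_{s,k} + M_k j - sum_{m,u} c_{s+u,m} g^{(km)}_u and lies in [0, M_k).  Since |c| <= j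
   and sum_m ||g^{(km)}||_1 <= M_k - 1, this forces y_{s,k} below the total weight |g^{(km)}_u| of the
   pairs (m, u) at which c_{s+u,m} is again extremal, with sign dictated by g^{(km)}_u.  The coordinate
   y_{s,k} is uniform on {0, ..., M_k - 1} and, because 0 is not in the semigroup P, independent of the
   coordinates on the subtrees rooted at the points s + u.  Iterating along a tree of depth L inside
   s P-bar bounds the probability of the projected event by rho^L with rho = (Mbar - 1) / Mbar < 1,
   so p_j = 0. *)

section \<open>Expectations under finite products of a pmf\<close>

definition prod_expectation :: "'b pmf \<Rightarrow> 'b set \<Rightarrow> 'i set \<Rightarrow> (('i \<Rightarrow> 'b) \<Rightarrow> real) \<Rightarrow> real" where
  "prod_expectation \<nu> S J h = (\<Sum>x\<in>PiE J (\<lambda>_. S). h x * (\<Prod>i\<in>J. pmf \<nu> (x i)))"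

lemma prod_expectation_empty: "prod_expectation \<nu> S {} h = h (\<lambda>_. undefined)"
  unfolding prod_expectation_def by simp

lemma prod_expectation_insert:
  assumes "finite J" "s \<notin> J"
  shows "prod_expectation \<nu> S (insert s J) h
       = prod_expectation \<nu> S J (\<lambda>w. \<Sum>a\<in>S. pmf \<nu> a * h (w(s := a)))"
proof -
  have "prod_expectation \<nu> S (insert s J) h
      = (\<Sum>(a, w)\<in>S \<times> PiE J (\<lambda>_. S). h (w(s := a)) * (\<Prod>i\<in>insert s J. pmf \<nu> ((w(s := a)) i)))"
    unfolding prod_expectation_def PiE_insert_eq
    by (subst sum.reindex[OF inj_combinator[OF assms(2)]]) (simp add: case_prod_unfold)
  also have "\<dots> = (\<Sum>(a, w)\<in>S \<times> PiE J (\<lambda>_. S). h (w(s := a)) * (pmf \<nu> a * (\<Prod>i\<in>J. pmf \<nu> (w i))))"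
  proof (intro sum.cong refl, clarify)
    fix a w
    have "(\<Prod>i\<in>J. pmf \<nu> ((w(s := a)) i)) = (\<Prod>i\<in>J. pmf \<nu> (w i))"
      using assms by (intro prod.cong) auto
    then show "h (w(s := a)) * (\<Prod>i\<in>insert s J. pmf \<nu> ((w(s := a)) i))
             = h (w(s := a)) * (pmf \<nu> a * (\<Prod>i\<in>J. pmf \<nu> (w i)))"
      using assms by simp
  qed
  also have "\<dots> = (\<Sum>w\<in>PiE J (\<lambda>_. S). \<Sum>a\<in>S. h (w(s := a)) * (pmf \<nu> a * (\<Prod>i\<in>J. pmf \<nu> (w i))))"
    by (simp add: sum.cartesian_product[symmetric] sum.swap[of _ S])
  also have "\<dots> = prod_expectation \<nu> S J (\<lambda>w. \<Sum>a\<in>S. pmf \<nu> a * h (w(s := a)))"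
    unfolding prod_expectation_def by (intro sum.cong refl) (simp add: sum_distrib_left mult_ac)
  finally show ?thesis .
qed

lemma prod_expectation_mono:
  assumes "\<And>x. x \<in> PiE J (\<lambda>_. S) \<Longrightarrow> h x \<le> h' x"
  shows "prod_expectation \<nu> S J h \<le> prod_expectation \<nu> S J h'"
  unfolding prod_expectation_def by (intro sum_mono mult_right_mono assms prod_nonneg) auto

lemma prod_expectation_cmult:
  "prod_expectation \<nu> S J (\<lambda>x. c * h x) = c * prod_expectation \<nu> S J h"
  unfolding prod_expectation_def by (simp add: sum_distrib_left mult_ac)

lemma prod_expectation_sum:
  "prod_expectation \<nu> S J (\<lambda>x. \<Sum>i\<in>I. h i x) = (\<Sum>i\<in>I. prod_expectation \<nu> S J (h i))"
  unfolding prod_expectation_def by (simp add: sum_distrib_right sum.swap[of _ I])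

lemma prod_expectation_insert_irrelevant:
  assumes "finite J" "s \<notin> J" "finite S" "set_pmf \<nu> \<subseteq> S"
    and "\<And>w a. h (w(s := a)) = h w"
  shows "prod_expectation \<nu> S (insert s J) h = prod_expectation \<nu> S J h"
  using sum_pmf_eq_1[OF assms(3,4)]
  by (simp add: prod_expectation_insert[OF assms(1,2)] assms(5) sum_distrib_right[symmetric])

lemma prod_expectation_marginal:
  assumes "finite J" "J0 \<subseteq> J" "finite S" "set_pmf \<nu> \<subseteq> S"
    and local: "\<And>x x'. (\<forall>i\<in>J0. x i = x' i) \<Longrightarrow> h x = h x'"
  shows "prod_expectation \<nu> S J h = prod_expectation \<nu> S J0 h"
proof -
  have "prod_expectation \<nu> S (J0 \<union> D) h = prod_expectation \<nu> S J0 h"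
    if "finite D" "D \<inter> J0 = {}" for D
    using that
  proof (induction D rule: finite_induct)
    case (insert t D)
    have "finite (J0 \<union> D)" using assms(1,2) insert.hyps(1) finite_subset by blast
    moreover have "h (w(t := a)) = h w" for w a
      using insert.prems by (intro local) auto
    ultimately show ?case
      using insert prod_expectation_insert_irrelevant[OF _ _ assms(3,4), of "J0 \<union> D" t h] by auto
  qed simp
  moreover have "J = J0 \<union> (J - J0)" using assms(2) by auto
  ultimately show ?thesis using assms(1) by (metis Diff_disjoint Int_commute finite_Diff)
qed

lemma measure_PiM_pmf_restrict:
  fixes \<nu> :: "'b pmf" and E J :: "'i set"
  defines "Q \<equiv> PiM E (\<lambda>_. measure_pmf \<nu>)"
  assumes J: "finite J" "J \<subseteq> E" and X: "finite X" "X \<subseteq> extensional J"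
  shows "{y \<in> space Q. restrict y J \<in> X} \<in> sets Q"
    and "measure Q {y \<in> space Q. restrict y J \<in> X} = (\<Sum>x\<in>X. \<Prod>i\<in>J. pmf \<nu> (x i))"
proof -
  interpret product_prob_space "\<lambda>_. measure_pmf \<nu>" E
    by unfold_locales (simp_all add: prob_space_measure_pmf)
  define A where "A x = prod_emb E (\<lambda>_. measure_pmf \<nu>) J (PiE J (\<lambda>i. {x i}))" for x
  have memA: "y \<in> A x \<longleftrightarrow> y \<in> space Q \<and> restrict y J = x" if "x \<in> X" for x y
  proof -
    have "PiE J (\<lambda>i. {x i}) = {x}" using that X by (intro PiE_singleton) auto
    then show ?thesis unfolding A_def prod_emb_def Q_def space_PiM by auto
  qed
  have eq: "{y \<in> space Q. restrict y J \<in> X} = (\<Union>x\<in>X. A x)"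
    using memA by auto
  have A: "A x \<in> sets Q" for x
    unfolding A_def Q_def using J by (intro sets_PiM_I) auto
  show "{y \<in> space Q. restrict y J \<in> X} \<in> sets Q"
    unfolding eq using X A by auto
  have "measure Q (\<Union>x\<in>X. A x) = (\<Sum>x\<in>X. measure Q (A x))"
    using X A memA unfolding Q_def
    by (intro measure_finite_Union) (auto simp: disjoint_family_on_def P.emeasure_finite)
  also have "\<dots> = (\<Sum>x\<in>X. \<Prod>i\<in>J. pmf \<nu> (x i))"
    unfolding A_def Q_def using J
    by (intro sum.cong refl, subst measure_PiM_emb) (auto simp: measure_pmf_single)
  finally show "measure Q {y \<in> space Q. restrict y J \<in> X} = (\<Sum>x\<in>X. \<Prod>i\<in>J. pmf \<nu> (x i))"
    unfolding eq .
qed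

(* Distance of a coordinate value from the end of {0, ..., Mk - 1} opposite to the direction sigma
   in which an extremal entry c_{s,k} = sigma j shifts it. *)
definition slack :: "int \<Rightarrow> nat \<Rightarrow> int \<Rightarrow> int" where
  "slack \<sigma> Mk x = (if \<sigma> = 1 then x else int Mk - 1 - x)"

lemma card_slack_less:
  assumes "h \<ge> 0"
  shows "card ({0..<int Mk} \<inter> {x. slack \<sigma> Mk x < h}) \<le> nat h"
proof -
  let ?A = "{0..<int Mk} \<inter> {x. slack \<sigma> Mk x < h}"
  have "inj_on (slack \<sigma> Mk) ?A" by (rule inj_onI) (auto simp: slack_def split: if_splits)
  moreover have "slack \<sigma> Mk ` ?A \<subseteq> {0..<h}" by (auto simp: slack_def)
  ultimately have "card ?A \<le> card {0..<h}" by (metis card_image card_mono finite_atLeastLessThan_int)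
  then show ?thesis by simp
qed

lemma sum_pmf_uniform_coordinate_le:
  fixes \<nu> :: "('k \<Rightarrow> int) pmf"
  assumes S: "finite S" "set_pmf \<nu> \<subseteq> S"
    and uniform: "map_pmf (\<lambda>a. a k) \<nu> = pmf_of_set {0..<int Mk}" and "Mk > 0"
    and card: "card ({0..<int Mk} \<inter> A) \<le> h"
  shows "(\<Sum>a\<in>S. pmf \<nu> a * of_bool (a k \<in> A)) \<le> real h / real Mk"
proof -
  have "(\<Sum>a\<in>S. pmf \<nu> a * of_bool (a k \<in> A)) = measure_pmf.prob \<nu> ({a. a k \<in> A} \<inter> S)"
    using S by (simp add: measure_measure_pmf_finite sum.inter_filter[symmetric] Int_def conj_commute
        of_bool_def if_distrib cong: if_cong)
  also have "\<dots> = measure_pmf.prob \<nu> {a. a k \<in> A}"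
    using S measure_Int_set_pmf[of \<nu>] by (metis Int_absorb1 inf_assoc)
  also have "\<dots> = measure_pmf.prob (map_pmf (\<lambda>a. a k) \<nu>) A"
    by (simp add: vimage_def)
  also have "\<dots> = card ({0..<int Mk} \<inter> A) / Mk"
    unfolding uniform using \<open>Mk > 0\<close> by (subst measure_pmf_of_set) auto
  also have "\<dots> \<le> real h / real Mk"
    using card by (simp add: divide_right_mono)
  finally show ?thesis .
qed

section \<open>Trees of translates\<close>

fun tree_nodes :: "'g::group_add set \<Rightarrow> nat \<Rightarrow> 'g \<Rightarrow> 'g set" where
  "tree_nodes U 0 t = {}"
| "tree_nodes U (Suc L) t = insert t (\<Union>u\<in>U. tree_nodes U L (t + u))"

lemma finite_tree_nodes: "finite U \<Longrightarrow> finite (tree_nodes U L t)"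
  by (induction L arbitrary: t) auto

lemma tree_nodes_subset_sPbar:
  assumes "U \<subseteq> P" "\<forall>a\<in>P. \<forall>b\<in>P. a + b \<in> P"
  shows "tree_nodes U L t \<subseteq> sPbar t P"
proof (induction L arbitrary: t)
  case (Suc L)
  have "sPbar (t + u) P \<subseteq> sPbar t P" if "u \<in> U" for u
  proof
    fix x assume "x \<in> sPbar (t + u) P"
    then obtain q where "q \<in> insert 0 P" "x = t + u + q"
      unfolding sPbar_def by blast
    then have "q \<in> insert 0 P" "x = t + (u + q)" by (simp_all add: add.assoc)
    moreover have "u + q \<in> P" if "q \<in> insert 0 P" using that \<open>u \<in> U\<close> assms by auto
    ultimately show "x \<in> sPbar t P" unfolding sPbar_def by blast
  qed
  moreover have "t \<in> sPbar t P" unfolding sPbar_def by (metis add_0_right image_eqI insertI1)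
  ultimately show ?case using Suc.IH by auto
qed simp

lemma root_notin_subtrees:
  assumes "U \<subseteq> P" "\<forall>a\<in>P. \<forall>b\<in>P. a + b \<in> P" "0 \<notin> P" "u \<in> U"
  shows "s \<notin> tree_nodes U L (s + u)"
proof
  assume "s \<in> tree_nodes U L (s + u)"
  then obtain q where q: "q \<in> insert 0 P" "s + 0 = s + (u + q)"
    using tree_nodes_subset_sPbar[OF assms(1,2)] by (fastforce simp: sPbar_def add.assoc)
  then have "u + q = 0" by (simp only: add_left_cancel)
  moreover have "u + q \<in> P" using q(1) assms by auto
  ultimately show False using assms(3) by simp
qed

section \<open>The coordinate inequality\<close>

lemma conv_mstar_fmat:
  fixes g :: "nat \<Rightarrow> nat \<Rightarrow> 'g::group_add \<Rightarrow> int"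
  assumes fin: "finite (supp (g k m))" and zero: "0 \<notin> supp (g k m)"
  shows "conv (\<lambda>r. c r m) (mstar (fmat M g) m k) s
       = (if k = m then int (M k) * c s m else 0) - (\<Sum>u\<in>supp (g k m). c (s + u) m * g k m u)"
proof -
  let ?V = "supp (g k m)"
  have g0: "g k m u = 0" if "u \<notin> ?V" for u using that by (simp add: supp_def)
  have "conv (\<lambda>r. c r m) (mstar (fmat M g) m k) s
      = (\<Sum>\<^sub>\<infinity>r\<in>uminus ` insert 0 ?V. c (s - r) m * mstar (fmat M g) m k r)"
    unfolding conv_def
  proof (rule infsum_cong_neutral)
    fix r assume "r \<in> UNIV - uminus ` insert 0 ?V"
    then have "- r \<notin> insert 0 ?V" by (metis DiffD2 image_eqI minus_minus)
    then show "c (s - r) m * mstar (fmat M g) m k r = 0"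
      using g0 by (auto simp: mstar_def fmat_def)
  qed auto
  also have "\<dots> = (\<Sum>r\<in>uminus ` insert 0 ?V. c (s - r) m * mstar (fmat M g) m k r)"
    using fin by simp
  also have "\<dots> = (\<Sum>u\<in>insert 0 ?V. c (s - - u) m * mstar (fmat M g) m k (- u))"
    by (subst sum.reindex) (auto simp: inj_on_def)
  also have "\<dots> = (\<Sum>u\<in>insert 0 ?V. c (s + u) m * ((if k = m \<and> u = 0 then int (M k) else 0) - g k m u))"
    by (simp add: mstar_def fmat_def)
  also have "\<dots> = (if k = m then int (M k) * c s m else 0)
      + (\<Sum>u\<in>?V. c (s + u) m * ((if k = m \<and> u = 0 then int (M k) else 0) - g k m u))"
    using fin zero g0[of 0] by simp
  also have "(\<Sum>u\<in>?V. c (s + u) m * ((if k = m \<and> u = 0 then int (M k) else 0) - g k m u))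
      = - (\<Sum>u\<in>?V. c (s + u) m * g k m u)"
    unfolding sum_negf[symmetric] using zero by (intro sum.cong refl) auto
  finally show ?thesis by simp
qed

lemma shift_act_mstar_fmat:
  fixes g :: "nat \<Rightarrow> nat \<Rightarrow> 'g::group_add \<Rightarrow> int"
  assumes k: "k \<in> {1..n}" and g: "\<forall>m\<in>{1..n}. finite (supp (g k m)) \<and> 0 \<notin> supp (g k m)"
  shows "shift_act n (mstar (fmat M g)) y c s k
       = y s k + int (M k) * c s k - (\<Sum>m\<in>{1..n}. \<Sum>u\<in>supp (g k m). c (s + u) m * g k m u)"
proof -
  have "(\<Sum>m\<in>{1..n}. conv (\<lambda>r. c r m) (mstar (fmat M g) m k) s)
      = (\<Sum>m\<in>{1..n}. (if k = m then int (M k) * c s m else 0) - (\<Sum>u\<in>supp (g k m). c (s + u) m * g k m u))"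
    using g by (intro sum.cong refl conv_mstar_fmat) auto
  then show ?thesis using k by (simp add: shift_act_def sum_subtractf)
qed

lemma signed_product_le:
  fixes e a j \<sigma> :: int
  assumes "\<bar>e\<bar> \<le> j" "\<sigma> = 1 \<or> \<sigma> = -1"
  shows "\<sigma> * (e * a) \<le> (j - 1) * \<bar>a\<bar> + \<bar>a\<bar> * of_bool (e = \<sigma> * sgn a * j)"
proof (cases "a = 0")
  case False
  define \<tau> where "\<tau> = \<sigma> * sgn a"
  have \<tau>: "\<tau> = 1 \<or> \<tau> = -1" using assms(2) False by (auto simp: \<tau>_def sgn_if)
  have "\<sigma> * (e * a) = \<bar>a\<bar> * (\<tau> * e)"
    unfolding \<tau>_def by (subst (1) sgn_mult_abs[of a, symmetric]) (simp only: mult_ac)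
  also have "\<dots> \<le> \<bar>a\<bar> * (j - 1 + of_bool (e = \<tau> * j))"
    using \<tau> assms(1) by (intro mult_left_mono) auto
  also have "\<dots> = (j - 1) * \<bar>a\<bar> + \<bar>a\<bar> * of_bool (e = \<sigma> * sgn a * j)"
    by (simp add: \<tau>_def algebra_simps)
  finally show ?thesis .
qed simp

lemma slack_less_extremal_weight:
  fixes g :: "nat \<Rightarrow> nat \<Rightarrow> 'g::group_add \<Rightarrow> int" and c y :: "'g \<Rightarrow> nat \<Rightarrow> int"
  assumes j: "int j \<ge> 1" and \<sigma>: "\<sigma> = 1 \<or> \<sigma> = -1"
    and c_le: "\<forall>t. \<forall>m\<in>{1..n}. \<bar>c t m\<bar> \<le> int j" and c_root: "c s k = \<sigma> * int j"
    and y: "y s \<in> Sf n M" and shifted: "shift_act n (mstar (fmat M g)) y c s \<in> Sf n M"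
    and k: "k \<in> {1..n}" and g: "\<forall>m\<in>{1..n}. finite (supp (g k m)) \<and> 0 \<notin> supp (g k m)"
    and dominant: "(\<Sum>m\<in>{1..n}. l1_int (g k m)) < int (M k)"
  shows "slack \<sigma> (M k) (y s k)
       < (\<Sum>m\<in>{1..n}. \<Sum>u\<in>supp (g k m). \<bar>g k m u\<bar> * of_bool (c (s + u) m = \<sigma> * sgn (g k m u) * int j))"
    (is "_ < ?H")
proof -
  define H where "H = ?H"
  define X where "X = (\<Sum>m\<in>{1..n}. \<Sum>u\<in>supp (g k m). c (s + u) m * g k m u)"
  define p where "p = int j * int (M k)"
  have "\<sigma> * X = (\<Sum>m\<in>{1..n}. \<Sum>u\<in>supp (g k m). \<sigma> * (c (s + u) m * g k m u))"
    unfolding X_def by (simp add: sum_distrib_left)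
  also have "\<dots> \<le> (\<Sum>m\<in>{1..n}. \<Sum>u\<in>supp (g k m). (int j - 1) * \<bar>g k m u\<bar>
      + \<bar>g k m u\<bar> * of_bool (c (s + u) m = \<sigma> * sgn (g k m u) * int j))"
    using c_le \<sigma> by (intro sum_mono signed_product_le) auto
  also have "\<dots> = (int j - 1) * (\<Sum>m\<in>{1..n}. l1_int (g k m)) + H"
    unfolding H_def by (simp add: l1_int_def sum.distrib sum_distrib_left)
  also have "\<dots> \<le> (int j - 1) * (int (M k) - 1) + H"
    using dominant j by (intro add_right_mono mult_left_mono) auto
  finally have X_le: "\<sigma> * X \<le> p - int j - int (M k) + 1 + H"
    by (simp add: p_def algebra_simps)
  have "y s k \<in> {0..<int (M k)}"
    using y k by (auto simp: Sf_def PiE_iff)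
  moreover have "shift_act n (mstar (fmat M g)) y c s k \<in> {0..<int (M k)}"
    using shifted k by (auto simp: Sf_def PiE_iff)
  then have "y s k + \<sigma> * p - X \<in> {0..<int (M k)}"
    unfolding shift_act_mstar_fmat[where g=g and M=M and y=y and c=c and s=s, OF k g] X_def c_root p_def
    by (simp add: mult_ac)
  ultimately have "slack \<sigma> (M k) (y s k) < H"
    using \<sigma>
  proof (elim disjE)
    assume "\<sigma> = 1" then show ?thesis using X_le j \<open>y s k + \<sigma> * p - X \<in> {0..<int (M k)}\<close>
      by (simp add: slack_def; linarith)
  next
    assume "\<sigma> = -1" then show ?thesis using X_le j \<open>y s k + \<sigma> * p - X \<in> {0..<int (M k)}\<close>
      by (simp add: slack_def; linarith)
  qed
  then show ?thesis unfolding H_def .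
qed

section \<open>Extremal events and their probability\<close>

(* For sigma = 1 (resp. -1) this contains the y-projection of Z^+_{j,s,k} (resp. Z^-_{j,s,k}), but it only
   constrains the coordinates on the tree of depth L rooted at s. *)
definition extremal_event :: "nat \<Rightarrow> (nat \<Rightarrow> nat) \<Rightarrow> (nat \<Rightarrow> nat \<Rightarrow> 'g::group_add \<Rightarrow> int) \<Rightarrow> 'g set
    \<Rightarrow> nat \<Rightarrow> nat \<Rightarrow> 'g \<Rightarrow> nat \<Rightarrow> int \<Rightarrow> ('g \<Rightarrow> nat \<Rightarrow> int) set" where
  "extremal_event n M F U j L s k \<sigma> =
     {y. \<exists>c. (\<forall>t. \<forall>m\<in>{1..n}. \<bar>c t m\<bar> \<le> int j) \<and> c s k = \<sigma> * int j
          \<and> (\<forall>t\<in>tree_nodes U L s. y t \<in> Sf n M \<and> shift_act n F y c t \<in> Sf n M)}"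

lemma extremal_event_local:
  assumes "\<forall>t\<in>tree_nodes U L s. y t = y' t"
  shows "y \<in> extremal_event n M F U j L s k \<sigma> \<longleftrightarrow> y' \<in> extremal_event n M F U j L s k \<sigma>"
proof -
  have "shift_act n F y c t = shift_act n F y' c t" if "t \<in> tree_nodes U L s" for c t
    using assms that by (simp add: shift_act_def)
  then show ?thesis using assms unfolding extremal_event_def by auto
qed

lemma abs_le_cmax:
  assumes "c \<in> Vset n N" "m \<in> {1..n}"
  shows "\<bar>c t m\<bar> \<le> cmax n c"
proof -
  have "\<bar>c t' m'\<bar> \<in> {0..int N}" if "m' \<in> {1..n}" for t' m'
  proof -
    have "c t' m' \<in> {- int N..int N}"
      using assms(1) PiE_mem that unfolding Vset_def by blast
    then show ?thesis by auto
  qed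
  then have "{\<bar>c t m\<bar> | t m. m \<in> {1..n}} \<subseteq> {0..int N}" by blast
  then have "finite {\<bar>c t m\<bar> | t m. m \<in> {1..n}}" by (rule finite_subset) simp
  then show ?thesis unfolding cmax_def using assms(2) by (intro Max_ge) auto
qed

lemma Zset_in_extremal_event:
  assumes "(y, c) \<in> Zset n M N F" "cmax n c = int j" "c s k = \<sigma> * int j"
  shows "y \<in> extremal_event n M (mstar F) U j L s k \<sigma>"
proof -
  have "c \<in> Vset n N" "y \<in> Yset n M" "shift_act n (mstar F) y c \<in> Yset n M"
    using assms(1) by (auto simp: Zset_def)
  then show ?thesis
    using assms(2,3) abs_le_cmax[of c n N] unfolding extremal_event_def Yset_def by (auto intro!: exI[of _ c])
qed

lemma finite_Sf: "finite (Sf n M)"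
  unfolding Sf_def by (intro finite_PiE) auto

locale dominant_setting =
  fixes n :: nat and M :: "nat \<Rightarrow> nat" and g :: "nat \<Rightarrow> nat \<Rightarrow> 'g::group_add \<Rightarrow> int"
    and P :: "'g set" and \<nu> :: "(nat \<Rightarrow> int) pmf"
  assumes n_pos: "n \<ge> 1"
    and g_fin: "\<forall>k\<in>{1..n}. \<forall>m\<in>{1..n}. finite (supp (g k m))"
    and M_dom: "\<forall>k\<in>{1..n}. int (M k) > (\<Sum>m\<in>{1..n}. l1_int (g k m))"
    and P_sub: "P \<subseteq> UNIV - {0}"
    and P_semigroup: "\<forall>a\<in>P. \<forall>b\<in>P. a + b \<in> P"
    and g_supp: "\<forall>k\<in>{1..n}. \<forall>m\<in>{1..n}. supp (g k m) \<subseteq> P"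
    and \<nu>_supp: "set_pmf \<nu> \<subseteq> Sf n M"
    and \<nu>_marg: "\<forall>k\<in>{1..n}. map_pmf (\<lambda>a. a k) \<nu> = pmf_of_set {0..<int (M k)}"
begin

definition U :: "'g set" where
  "U = (\<Union>k\<in>{1..n}. \<Union>m\<in>{1..n}. supp (g k m))"

definition \<rho> :: real where
  "\<rho> = (real (Max (M ` {1..n})) - 1) / real (Max (M ` {1..n}))"

abbreviation event :: "nat \<Rightarrow> nat \<Rightarrow> 'g \<Rightarrow> nat \<Rightarrow> int \<Rightarrow> ('g \<Rightarrow> nat \<Rightarrow> int) set" where
  "event j L s k \<sigma> \<equiv> extremal_event n M (mstar (fmat M g)) U j L s k \<sigma>"

abbreviation expect :: "'g set \<Rightarrow> (('g \<Rightarrow> nat \<Rightarrow> int) \<Rightarrow> real) \<Rightarrow> real" where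
  "expect J h \<equiv> prod_expectation \<nu> (Sf n M) J h"

lemma finite_U: "finite U"
  unfolding U_def using g_fin by auto

lemma U_subset_P: "U \<subseteq> P"
  unfolding U_def using g_supp by auto

lemma root_notin_subtree: "u \<in> U \<Longrightarrow> s \<notin> tree_nodes U L (s + u)"
  using root_notin_subtrees[OF U_subset_P P_semigroup] P_sub by blast

lemma supp_g: "k \<in> {1..n} \<Longrightarrow> \<forall>m\<in>{1..n}. finite (supp (g k m)) \<and> 0 \<notin> supp (g k m)"
  using g_fin g_supp P_sub by blast

lemma M_pos:
  assumes "k \<in> {1..n}"
  shows "M k > 0"
proof -
  have "0 \<le> (\<Sum>m\<in>{1..n}. l1_int (g k m))"
    unfolding l1_int_def by (intro sum_nonneg) auto
  moreover have "(\<Sum>m\<in>{1..n}. l1_int (g k m)) < int (M k)"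
    using M_dom assms by blast
  ultimately show ?thesis by linarith
qed

lemma M_le_Max: "k \<in> {1..n} \<Longrightarrow> M k \<le> Max (M ` {1..n})"
  by simp

lemma Max_M_pos: "Max (M ` {1..n}) > 0"
proof -
  have "1 \<in> {1..n}" using n_pos by simp
  then show ?thesis using M_pos M_le_Max by (blast intro: less_le_trans)
qed

lemma rho_nonneg: "0 \<le> \<rho>" and rho_less_1: "\<rho> < 1"
proof -
  have "real (Max (M ` {1..n})) \<ge> 1" using Max_M_pos by linarith
  then show "0 \<le> \<rho>" "\<rho> < 1" unfolding \<rho>_def by simp_all
qed

lemma row_norm_div_le_rho:
  assumes k: "k \<in> {1..n}"
  shows "real_of_int (\<Sum>m\<in>{1..n}. l1_int (g k m)) / real (M k) \<le> \<rho>"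
proof -
  have Mk: "0 < real (M k)" "real (M k) \<le> real (Max (M ` {1..n}))"
    using M_pos[OF k] M_le_Max[OF k] by auto
  have "(\<Sum>m\<in>{1..n}. l1_int (g k m)) < int (M k)"
    using M_dom k by blast
  then have "real_of_int (\<Sum>m\<in>{1..n}. l1_int (g k m)) \<le> real (M k) - 1"
    by linarith
  then have "real_of_int (\<Sum>m\<in>{1..n}. l1_int (g k m)) / real (M k) \<le> (real (M k) - 1) / real (M k)"
    using Mk(1) by (rule divide_right_mono[OF _ less_imp_le])
  also have "\<dots> = 1 - 1 / real (M k)"
    using Mk(1) by (simp add: diff_divide_distrib)
  also have "\<dots> \<le> 1 - 1 / real (Max (M ` {1..n}))"
    using Mk by (simp add: frac_le)
  also have "\<dots> = \<rho>"
    unfolding \<rho>_def using Max_M_pos by (simp add: diff_divide_distrib)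
  finally show ?thesis .
qed

definition extremal_weight :: "nat \<Rightarrow> nat \<Rightarrow> 'g \<Rightarrow> nat \<Rightarrow> int \<Rightarrow> ('g \<Rightarrow> nat \<Rightarrow> int) \<Rightarrow> int" where
  "extremal_weight j L s k \<sigma> w =
     (\<Sum>m\<in>{1..n}. \<Sum>u\<in>supp (g k m). \<bar>g k m u\<bar> * of_bool (w \<in> event j L (s + u) m (\<sigma> * sgn (g k m u))))"

lemma extremal_weight_nonneg: "extremal_weight j L s k \<sigma> w \<ge> 0"
  unfolding extremal_weight_def by (intro sum_nonneg) auto

lemma event_Suc_imp_slack_less:
  assumes k: "k \<in> {1..n}" and \<sigma>: "\<sigma> = 1 \<or> \<sigma> = -1" and j: "j \<ge> 1"
    and ev: "w(s := a) \<in> event j (Suc L) s k \<sigma>"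
  shows "slack \<sigma> (M k) (a k) < extremal_weight j L s k \<sigma> w"
proof -
  let ?y = "w(s := a)"
  from ev obtain c where c_le: "\<forall>t. \<forall>m\<in>{1..n}. \<bar>c t m\<bar> \<le> int j" and c_root: "c s k = \<sigma> * int j"
    and admissible: "\<forall>t\<in>tree_nodes U (Suc L) s. ?y t \<in> Sf n M \<and> shift_act n (mstar (fmat M g)) ?y c t \<in> Sf n M"
    unfolding extremal_event_def by blast
  have "?y s \<in> Sf n M" "shift_act n (mstar (fmat M g)) ?y c s \<in> Sf n M"
    using admissible by simp_all
  from slack_less_extremal_weight[OF _ \<sigma> c_le c_root this k supp_g[OF k]] j M_dom k
  have "slack \<sigma> (M k) (a k)
      < (\<Sum>m\<in>{1..n}. \<Sum>u\<in>supp (g k m). \<bar>g k m u\<bar> * of_bool (c (s + u) m = \<sigma> * sgn (g k m u) * int j))"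
    by simp
  also have "\<dots> \<le> extremal_weight j L s k \<sigma> w"
    unfolding extremal_weight_def
  proof (intro sum_mono mult_left_mono)
    fix m u assume m: "m \<in> {1..n}" and u: "u \<in> supp (g k m)"
    have uU: "u \<in> U" unfolding U_def using k m u by blast
    show "of_bool (c (s + u) m = \<sigma> * sgn (g k m u) * int j)
        \<le> (of_bool (w \<in> event j L (s + u) m (\<sigma> * sgn (g k m u))) :: int)"
    proof (cases "c (s + u) m = \<sigma> * sgn (g k m u) * int j")
      case True
      have "tree_nodes U L (s + u) \<subseteq> tree_nodes U (Suc L) s" using uU by auto
      then have "?y \<in> event j L (s + u) m (\<sigma> * sgn (g k m u))"
        unfolding extremal_event_def using c_le True admissible by blast
      moreover have "\<forall>t\<in>tree_nodes U L (s + u). ?y t = w t"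
        using root_notin_subtree[OF uU] by auto
      ultimately have "w \<in> event j L (s + u) m (\<sigma> * sgn (g k m u))"
        using extremal_event_local by blast
      then show ?thesis by simp
    qed simp
  qed simp
  finally show ?thesis .
qed

lemma expectation_event_Suc_le:
  assumes k: "k \<in> {1..n}" and \<sigma>: "\<sigma> = 1 \<or> \<sigma> = -1" and j: "j \<ge> 1"
  shows "expect (tree_nodes U (Suc L) s) (\<lambda>x. of_bool (x \<in> event j (Suc L) s k \<sigma>))
       \<le> expect (\<Union>u\<in>U. tree_nodes U L (s + u)) (\<lambda>w. real_of_int (extremal_weight j L s k \<sigma> w) / real (M k))"
proof -
  let ?J = "\<Union>u\<in>U. tree_nodes U L (s + u)"
  have J: "finite ?J" "s \<notin> ?J"
    using finite_U finite_tree_nodes root_notin_subtree by auto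
  have "expect (tree_nodes U (Suc L) s) (\<lambda>x. of_bool (x \<in> event j (Suc L) s k \<sigma>))
      = expect ?J (\<lambda>w. \<Sum>a\<in>Sf n M. pmf \<nu> a * of_bool (w(s := a) \<in> event j (Suc L) s k \<sigma>))"
    by (simp add: prod_expectation_insert[OF J])
  also have "\<dots> \<le> expect ?J (\<lambda>w. \<Sum>a\<in>Sf n M. pmf \<nu> a
      * of_bool (a k \<in> {x. slack \<sigma> (M k) x < extremal_weight j L s k \<sigma> w}))"
  proof (intro prod_expectation_mono sum_mono mult_left_mono)
    fix w a
    show "(of_bool (w(s := a) \<in> event j (Suc L) s k \<sigma>) :: real)
        \<le> of_bool (a k \<in> {x. slack \<sigma> (M k) x < extremal_weight j L s k \<sigma> w})"
      using event_Suc_imp_slack_less[OF k \<sigma> j, of w s a L] by auto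
  qed simp
  also have "\<dots> \<le> expect ?J (\<lambda>w. real (nat (extremal_weight j L s k \<sigma> w)) / real (M k))"
  proof (intro prod_expectation_mono)
    fix w
    show "(\<Sum>a\<in>Sf n M. pmf \<nu> a * of_bool (a k \<in> {x. slack \<sigma> (M k) x < extremal_weight j L s k \<sigma> w}))
        \<le> real (nat (extremal_weight j L s k \<sigma> w)) / real (M k)"
      using \<nu>_marg k by (intro sum_pmf_uniform_coordinate_le[OF finite_Sf \<nu>_supp _ M_pos[OF k]]
          card_slack_less[OF extremal_weight_nonneg]) auto
  qed
  also have "\<dots> = expect ?J (\<lambda>w. real_of_int (extremal_weight j L s k \<sigma> w) / real (M k))"
    using extremal_weight_nonneg by simp
  finally show ?thesis .
qed

lemma expectation_extremal_weight_le:
  assumes k: "k \<in> {1..n}" and \<sigma>: "\<sigma> = 1 \<or> \<sigma> = -1"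
    and IH: "\<And>t m \<sigma>'. m \<in> {1..n} \<Longrightarrow> \<sigma>' = 1 \<or> \<sigma>' = -1 \<Longrightarrow>
               expect (tree_nodes U L t) (\<lambda>x. of_bool (x \<in> event j L t m \<sigma>')) \<le> \<rho> ^ L"
  shows "expect (\<Union>u\<in>U. tree_nodes U L (s + u)) (\<lambda>w. real_of_int (extremal_weight j L s k \<sigma> w) / real (M k))
       \<le> \<rho> ^ Suc L"
proof -
  let ?J = "\<Union>u\<in>U. tree_nodes U L (s + u)"
  let ?ev = "\<lambda>m u w. of_bool (w \<in> event j L (s + u) m (\<sigma> * sgn (g k m u))) :: real"
  have "expect ?J (\<lambda>w. real_of_int (extremal_weight j L s k \<sigma> w) / real (M k))
      = (\<Sum>m\<in>{1..n}. \<Sum>u\<in>supp (g k m). \<bar>g k m u\<bar> / real (M k) * expect ?J (?ev m u))"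
  proof -
    have "(\<lambda>w. real_of_int (extremal_weight j L s k \<sigma> w) / real (M k))
        = (\<lambda>w. \<Sum>m\<in>{1..n}. \<Sum>u\<in>supp (g k m). \<bar>g k m u\<bar> / real (M k) * ?ev m u w)"
      by (simp add: extremal_weight_def sum_divide_distrib)
    then show ?thesis by (simp only: prod_expectation_sum prod_expectation_cmult)
  qed
  also have "\<dots> \<le> (\<Sum>m\<in>{1..n}. \<Sum>u\<in>supp (g k m). \<bar>g k m u\<bar> / real (M k) * \<rho> ^ L)"
  proof (intro sum_mono mult_left_mono)
    fix m u assume m: "m \<in> {1..n}" and u: "u \<in> supp (g k m)"
    have "u \<in> U" unfolding U_def using k m u by blast
    moreover have "?ev m u x = ?ev m u x'" if "\<forall>i\<in>tree_nodes U L (s + u). x i = x' i" for x x'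
      using extremal_event_local[OF that] by simp
    ultimately have "expect ?J (?ev m u) = expect (tree_nodes U L (s + u)) (?ev m u)"
      using finite_U finite_tree_nodes by (intro prod_expectation_marginal[OF _ _ finite_Sf \<nu>_supp]) auto
    also have "\<dots> \<le> \<rho> ^ L"
      using IH[OF m] \<sigma> u by (auto simp: supp_def sgn_if)
    finally show "expect ?J (?ev m u) \<le> \<rho> ^ L" .
  qed simp
  also have "\<dots> = real_of_int (\<Sum>m\<in>{1..n}. l1_int (g k m)) / real (M k) * \<rho> ^ L"
    by (simp add: l1_int_def sum_divide_distrib sum_distrib_right)
  also have "\<dots> \<le> \<rho> * \<rho> ^ L"
    using row_norm_div_le_rho[OF k] rho_nonneg by (intro mult_right_mono) auto
  also have "\<dots> = \<rho> ^ Suc L"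
    by simp
  finally show ?thesis .
qed

lemma expectation_event_le:
  assumes "k \<in> {1..n}" "\<sigma> = 1 \<or> \<sigma> = -1" "j \<ge> 1"
  shows "expect (tree_nodes U L s) (\<lambda>x. of_bool (x \<in> event j L s k \<sigma>)) \<le> \<rho> ^ L"
  using assms
proof (induction L arbitrary: s k \<sigma>)
  case 0
  then show ?case by (simp add: prod_expectation_empty)
next
  case (Suc L)
  have "expect (tree_nodes U (Suc L) s) (\<lambda>x. of_bool (x \<in> event j (Suc L) s k \<sigma>))
      \<le> expect (\<Union>u\<in>U. tree_nodes U L (s + u)) (\<lambda>w. real_of_int (extremal_weight j L s k \<sigma> w) / real (M k))"
    by (rule expectation_event_Suc_le[OF Suc.prems])
  also have "\<dots> \<le> \<rho> ^ Suc L"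
    using Suc.IH Suc.prems(3) by (intro expectation_extremal_weight_le[OF Suc.prems(1,2)])
  finally show ?case .
qed

lemma projection_subset_event_cylinder:
  assumes Z: "\<And>y c. (y, c) \<in> Z \<Longrightarrow> (y, c) \<in> Zset n M N (fmat M g) \<and> cmax n c = int j \<and> c s k = \<sigma> * int j"
  shows "(\<lambda>y. restrict y (sPbar s P)) ` fst ` Z
       \<subseteq> {x \<in> space (PiM (sPbar s P) (\<lambda>_. measure_pmf \<nu>)).
           restrict x (tree_nodes U L s) \<in> PiE (tree_nodes U L s) (\<lambda>_. Sf n M) \<inter> event j L s k \<sigma>}"
proof
  let ?T = "tree_nodes U L s"
  fix x assume "x \<in> (\<lambda>y. restrict y (sPbar s P)) ` fst ` Z"
  then obtain y c where "(y, c) \<in> Z" and x: "x = restrict y (sPbar s P)" by force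
  then have "y \<in> event j L s k \<sigma>" "\<forall>t. y t \<in> Sf n M"
    using Z Zset_in_extremal_event by (fastforce simp: Zset_def Yset_def)+
  then have y: "restrict y ?T \<in> PiE ?T (\<lambda>_. Sf n M) \<inter> event j L s k \<sigma>"
    using extremal_event_local[of U L s "restrict y ?T" y] by auto
  have "restrict x ?T = restrict y ?T"
    using tree_nodes_subset_sPbar[OF U_subset_P P_semigroup] by (simp add: x Int_absorb1)
  moreover have "x \<in> space (PiM (sPbar s P) (\<lambda>_. measure_pmf \<nu>))" by (simp add: x space_PiM)
  ultimately show "x \<in> {x \<in> space (PiM (sPbar s P) (\<lambda>_. measure_pmf \<nu>)).
      restrict x ?T \<in> PiE ?T (\<lambda>_. Sf n M) \<inter> event j L s k \<sigma>}"
    using y by (metis (no_types, lifting) mem_Collect_eq)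
qed

lemma projmeas_extremal_le:
  assumes k: "k \<in> {1..n}" and \<sigma>: "\<sigma> = 1 \<or> \<sigma> = -1" and j: "j \<ge> 1"
    and Z: "\<And>y c. (y, c) \<in> Z \<Longrightarrow> (y, c) \<in> Zset n M N (fmat M g) \<and> cmax n c = int j \<and> c s k = \<sigma> * int j"
  shows "projmeas \<nu> (sPbar s P) Z \<le> \<rho> ^ L"
proof -
  let ?Q = "PiM (sPbar s P) (\<lambda>_. measure_pmf \<nu>)"
  let ?T = "tree_nodes U L s"
  let ?X = "PiE ?T (\<lambda>_. Sf n M) \<inter> event j L s k \<sigma>"
  interpret Q: prob_space ?Q
    by (intro prob_space_PiM) (simp add: prob_space_measure_pmf)
  have T: "finite ?T" "?T \<subseteq> sPbar s P"
    using finite_tree_nodes[OF finite_U] tree_nodes_subset_sPbar[OF U_subset_P P_semigroup] by auto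
  have X: "finite ?X" "?X \<subseteq> extensional ?T"
    using finite_PiE[OF T(1) finite_Sf] by (auto simp: PiE_def)
  have "projmeas \<nu> (sPbar s P) Z \<le> measure ?Q {x \<in> space ?Q. restrict x ?T \<in> ?X}"
    unfolding projmeas_def nuE_def using projection_subset_event_cylinder[OF Z]
    by (intro Q.finite_measure_mono measure_PiM_pmf_restrict(1)[OF T X])
  also have "\<dots> = (\<Sum>x\<in>?X. \<Prod>i\<in>?T. pmf \<nu> (x i))"
    by (rule measure_PiM_pmf_restrict(2)[OF T X])
  also have "\<dots> = expect ?T (\<lambda>x. of_bool (x \<in> event j L s k \<sigma>))"
    unfolding prod_expectation_def sum.inter_restrict[OF finite_PiE[OF T(1) finite_Sf]]
    by (intro sum.cong) auto
  also have "\<dots> \<le> \<rho> ^ L"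
    by (rule expectation_event_le[OF k \<sigma> j])
  finally show ?thesis .
qed

lemma projmeas_extremal_eq_0:
  assumes "k \<in> {1..n}" "\<sigma> = 1 \<or> \<sigma> = -1" "j \<ge> 1"
    and "\<And>y c. (y, c) \<in> Z \<Longrightarrow> (y, c) \<in> Zset n M N (fmat M g) \<and> cmax n c = int j \<and> c s k = \<sigma> * int j"
  shows "projmeas \<nu> (sPbar s P) Z = 0"
proof -
  have "projmeas \<nu> (sPbar s P) Z \<le> \<rho> ^ L" for L
    using projmeas_extremal_le[OF assms] .
  moreover have "projmeas \<nu> (sPbar s P) Z \<ge> 0"
    unfolding projmeas_def by (rule measure_nonneg)
  moreover have "\<not> projmeas \<nu> (sPbar s P) Z > 0"
  proof
    assume "projmeas \<nu> (sPbar s P) Z > 0"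
    then obtain L where "\<rho> ^ L < projmeas \<nu> (sPbar s P) Z"
      using real_arch_pow_inv rho_less_1 by blast
    with \<open>projmeas \<nu> (sPbar s P) Z \<le> \<rho> ^ L\<close> show False by simp
  qed
  ultimately show ?thesis by simp
qed

lemma pj_eq_0:
  assumes "j \<ge> 1"
  shows "pj n M N (fmat M g) P \<nu> j s = 0"
proof -
  have "projmeas \<nu> (sPbar s P) (Zplus n M N (fmat M g) j s k) = 0" if "k \<in> {1..n}" for k
    by (rule projmeas_extremal_eq_0[where \<sigma> = 1, OF that _ assms]) (auto simp: Zplus_def)
  moreover have "projmeas \<nu> (sPbar s P) (Zminus n M N (fmat M g) j s k) = 0" if "k \<in> {1..n}" for k
    by (rule projmeas_extremal_eq_0[where \<sigma> = "-1", OF that _ assms]) (auto simp: Zminus_def)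
  moreover have "1 \<in> {1..n}" using n_pos by simp
  ultimately show ?thesis unfolding pj_def by (subst Max_eq_iff) auto
qed

end

theorem lemma4p3:
  fixes n N :: nat
    and M :: "nat \<Rightarrow> nat"
    and g :: "nat \<Rightarrow> nat \<Rightarrow> 'g::{group_add,countable} \<Rightarrow> int"
    and P :: "'g set"
    and Finv :: "nat \<Rightarrow> nat \<Rightarrow> 'g \<Rightarrow> real"
    and \<nu> :: "(nat \<Rightarrow> int) pmf"
  assumes inf_G: "infinite (UNIV :: 'g set)"
    and n_pos: "n \<ge> 1"
    and M_pos: "\<forall>k\<in>{1..n}. M k > 0"
    and g_fin: "\<forall>k\<in>{1..n}. \<forall>m\<in>{1..n}. finite (supp (g k m))"
    and M_dom: "\<forall>k\<in>{1..n}. int (M k) > (\<Sum>m\<in>{1..n}. l1_int (g k m))"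
    and P_sub: "P \<subseteq> UNIV - {0}"
    and P_semigroup: "\<forall>a\<in>P. \<forall>b\<in>P. a + b \<in> P"
    and g_supp: "\<forall>k\<in>{1..n}. \<forall>m\<in>{1..n}. supp (g k m) \<subseteq> P"
    and Finv_inv: "is_l1_inverse n Finv (mstar (fmat M g))"
    and \<nu>_supp: "set_pmf \<nu> \<subseteq> Sf n M"
    and \<nu>_marg: "\<forall>k\<in>{1..n}. map_pmf (\<lambda>a. a k) \<nu> = pmf_of_set {0..<int (M k)}"
    and N_bound: "real N \<ge> real (Max (M ` {1..n})) * norm_1inf n Finv"
  shows "\<forall>j\<in>{1..N}. \<forall>s::'g.
           pj n M N (fmat M g) P \<nu> j s
             \<le> (real (Max (M ` {1..n})) - 1) / real (Max (M ` {1..n}))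
                * pj n M N (fmat M g) P \<nu> j s"
proof (intro ballI allI)
  fix j s assume "j \<in> {1..N}"
  interpret dominant_setting n M g P \<nu>
    using n_pos g_fin M_dom P_sub P_semigroup g_supp \<nu>_supp \<nu>_marg by unfold_locales
  have "pj n M N (fmat M g) P \<nu> j s = 0"
    using \<open>j \<in> {1..N}\<close> by (intro pj_eq_0) simp
  then show "pj n M N (fmat M g) P \<nu> j s
      \<le> (real (Max (M ` {1..n})) - 1) / real (Max (M ` {1..n})) * pj n M N (fmat M g) P \<nu> j s"
    by simp
qed

end
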